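(* Fix $t\in\{1,\dots,M\}$. For every $z^*\in F(\mathcal{T}_t)$, the number of active indices of $C_t$ at $z^*$ satisfies $|K_t(z^* )|\in\{1,2\}$.
   Context: Fix reals $W,H>0$, integers $N\ge N_m\ge 2$, and widths $w_i>0$, heights $h_i>0$ for $1\le i\le N_m$. Points of $\mathbb{R}^{2N}$ are written $z=(x,y)$ with $x=(x_1,\dots,x_N)$, $y=(y_1,\dots,y_N)$. For $1\le i\le N_m$ let $B_i^x=\{z: 0\le x_i\le W-w_i\}$, $B_i^y=\{z: 0\le y_i\le H-h_i\}$; for $i\neq j$ let $B_{i,j}=B_i^x\cap B_i^y\cap B_j^x\cap B_j^y$, $O^x_{i,j}=\{z: x_i+w_i\le x_j\}$, $O^y_{i,j}=\{z: y_i+h_i\le y_j\}$. Define the closed convex sets $C_{i,j,\mathsf{L}}=O^x_{i,j}\cap B_{i,j}$, $C_{i,j,\mathsf{R}}=O^x_{j,i}\cap B_{i,j}$, $C_{i,j,\mathsf{B}}=O^y_{i,j}\cap B_{i,j}$, $C_{i,j,\mathsf{A}}=O^y_{j,i}\cap B_{i,j}$ (assumed nonempty) and $C_{i,j}=C_{i,j,\mathsf{L}}\cup C_{i,j,\mathsf{R}}\cup C_{i,j,\mathsf{B}}\cup C_{i,j,\mathsf{A}}$. Enumerate the pairs $1\le i<j\le N_m$ by $t=1,\dots,M$ and write $C_t=C_{i,j}$, $C_{t,k}=C_{i,j,k}$. With the Euclidean norm and $\mathrm{d}(z,C)=\inf_{c\in C}\|z-c\|$: $\mathcal{P}_t(z)=\{c\in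 C_t:\|z-c\|=\mathrm{d}(z,C_t)\}$, $P_{t,k}(z)$ is the unique nearest point of $C_{t,k}$ to $z$; for a fixed $\lambda\in(0,2)$, $\mathcal{T}_t(z)=\{z+\lambda(p-z):p\in\mathcal{P}_t(z)\}$, $F(\mathcal{T}_t)=\{z: z\in\mathcal{T}_t(z)\}$. Active indices: $K_t(z)=\{k\in\{\mathsf{L},\mathsf{R},\mathsf{B},\mathsf{A}\}: P_{t,k}(z)\in\mathcal{P}_t(z)\}$. *)

theory Defs
  imports "HOL-Analysis.Analysis"
begin

text \<open>Points of R^(2N) are pairs z = (x, y) of vectors in real^'n, CARD('n) = N;
  the product carries the Euclidean norm sqrt(|x|^2 + |y|^2).\<close>

type_synonym 'n pt = "(real^'n) \<times> (real^'n)"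

datatype side = sL | sR | sB | sA

definition Bx :: "real \<Rightarrow> ('n::finite \<Rightarrow> real) \<Rightarrow> 'n \<Rightarrow> 'n pt set" where
  "Bx W w i = {z. 0 \<le> fst z $ i \<and> fst z $ i \<le> W - w i}"

definition By :: "real \<Rightarrow> ('n::finite \<Rightarrow> real) \<Rightarrow> 'n \<Rightarrow> 'n pt set" where
  "By H h i = {z. 0 \<le> snd z $ i \<and> snd z $ i \<le> H - h i}"

definition Bij :: "real \<Rightarrow> real \<Rightarrow> ('n::finite \<Rightarrow> real) \<Rightarrow> ('n \<Rightarrow> real) \<Rightarrow> 'n \<Rightarrow> 'n \<Rightarrow> 'n pt set" where
  "Bij W H w h i j = Bx W w i \<inter> By H h i \<inter> Bx W w j \<inter> By H h j"

definition Ox :: "('n::finite \<Rightarrow> real) \<Rightarrow> 'n \<Rightarrow> 'n \<Rightarrow> 'n pt set" where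
  "Ox w i j = {z. fst z $ i + w i \<le> fst z $ j}"

definition Oy :: "('n::finite \<Rightarrow> real) \<Rightarrow> 'n \<Rightarrow> 'n \<Rightarrow> 'n pt set" where
  "Oy h i j = {z. snd z $ i + h i \<le> snd z $ j}"

definition Cpiece :: "real \<Rightarrow> real \<Rightarrow> ('n::finite \<Rightarrow> real) \<Rightarrow> ('n \<Rightarrow> real) \<Rightarrow> 'n \<Rightarrow> 'n \<Rightarrow> side \<Rightarrow> 'n pt set" where
  "Cpiece W H w h i j k = (case k of
      sL \<Rightarrow> Ox w i j \<inter> Bij W H w h i j
    | sR \<Rightarrow> Ox w j i \<inter> Bij W H w h i j
    | sB \<Rightarrow> Oy h i j \<inter> Bij W H w h i j
    | sA \<Rightarrow> Oy h j i \<inter> Bij W H w h i j)"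

definition Cunion :: "real \<Rightarrow> real \<Rightarrow> ('n::finite \<Rightarrow> real) \<Rightarrow> ('n \<Rightarrow> real) \<Rightarrow> 'n \<Rightarrow> 'n \<Rightarrow> 'n pt set" where
  "Cunion W H w h i j = (\<Union>k. Cpiece W H w h i j k)"

definition projSet :: "'a::metric_space set \<Rightarrow> 'a \<Rightarrow> 'a set" where
  "projSet C z = {c \<in> C. dist z c = infdist z C}"

definition relaxOp :: "real \<Rightarrow> 'a::real_normed_vector set \<Rightarrow> 'a \<Rightarrow> 'a set" where
  "relaxOp lam C z = {z + lam *\<^sub>R (p - z) | p. p \<in> projSet C z}"

definition fixSet :: "('a \<Rightarrow> 'a set) \<Rightarrow> 'a set" where
  "fixSet T = {z. z \<in> T z}"

definition activeIdx :: "real \<Rightarrow> real \<Rightarrow> ('n::finite \<Rightarrow> real) \<Rightarrow> ('n \<Rightarrow> real) \<Rightarrow> 'n \<Rightarrow> 'n \<Rightarrow> 'n pt \<Rightarrow> side set" where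
  "activeIdx W H w h i j z =
     {k. closest_point (Cpiece W H w h i j k) z \<in> projSet (Cunion W H w h i j) z}"

end

theory Submission
  imports Defs
begin

text \<open>A fixed point of the relaxed projection must coincide with the chosen nearest point, so it
  lies in the union and every piece containing it has it as its own nearest point. Thus the active
  indices at a fixed point are just the pieces containing it. Since the widths and heights are
  positive, no point lies both left and right of the other module, nor both below and above it,
  so at most one piece from each pair is active, and at least one is.\<close>

lemma projSet_of_mem:
  assumes "z \<in> C"
  shows "projSet C z = {z}"
  using assms by (auto simp: projSet_def)

lemma fixSet_relaxOp:
  assumes "lam \<noteq> 0"
  shows "fixSet (relaxOp lam C) = C"
proof (intro set_eqI iffI)
  fix z assume "z \<in> fixSet (relaxOp lam C)"
  then obtain p where p: "p \<in> projSet C z" and "z = z + lam *\<^sub>R (p - z)"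
    unfolding fixSet_def relaxOp_def by blast
  then have "p = z" using assms by simp
  with p show "z \<in> C" by (simp add: projSet_def)
next
  fix z assume "z \<in> C"
  then show "z \<in> fixSet (relaxOp lam C)"
    by (auto simp: fixSet_def relaxOp_def projSet_of_mem)
qed

lemma closed_Cpiece: "closed (Cpiece W H w h i j k)"
  unfolding Cpiece_def Bij_def Bx_def By_def Ox_def Oy_def
  by (cases k) (auto intro!: closed_Int closed_Collect_conj closed_Collect_le continuous_intros)

lemma Cpiece_sL_sR_disjoint:
  assumes "w i + w j > 0"
  shows "Cpiece W H w h i j sL \<inter> Cpiece W H w h i j sR = {}"
  using assms by (auto simp: Cpiece_def Ox_def)

lemma Cpiece_sB_sA_disjoint:
  assumes "h i + h j > 0"
  shows "Cpiece W H w h i j sB \<inter> Cpiece W H w h i j sA = {}"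
  using assms by (auto simp: Cpiece_def Oy_def)

lemma activeIdx_of_mem_Cunion:
  assumes "\<And>k. Cpiece W H w h i j k \<noteq> {}" and "z \<in> Cunion W H w h i j"
  shows "activeIdx W H w h i j z = {k. z \<in> Cpiece W H w h i j k}"
proof -
  have "closest_point (Cpiece W H w h i j k) z = z \<longleftrightarrow> z \<in> Cpiece W H w h i j k" for k
    by (metis assms(1) closed_Cpiece closest_point_in_set closest_point_self)
  then show ?thesis
    using assms(2) by (simp add: activeIdx_def projSet_of_mem)
qed

lemma finite_side_set: "finite (S :: side set)"
  by (rule finite_subset[of S "{sL, sR, sB, sA}"]) (auto intro: side.exhaust)

lemma card_side_set_le_2:
  assumes "\<not> {sL, sR} \<subseteq> S" and "\<not> {sB, sA} \<subseteq> S"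
  shows "card S \<le> 2"
proof -
  obtain x y where xy: "x \<in> {sL, sR}" "x \<notin> S" "y \<in> {sB, sA}" "y \<notin> S"
    using assms by blast
  then have "S \<subseteq> {sL, sR, sB, sA} - {x, y}"
    by (auto intro: side.exhaust)
  moreover have "card ({sL, sR, sB, sA} - {x, y}) = 2"
    using xy(1,3) by auto
  ultimately show ?thesis
    by (metis card_mono finite_side_set)
qed

theorem mainTheorem4:
  fixes W H lam :: real and w h :: "'n::{finite,linorder} \<Rightarrow> real"
    and Mods :: "'n set" and i j :: 'n and zs :: "'n pt"
  assumes "W > 0" and "H > 0"
    and "card Mods \<ge> 2"
    and "\<And>m. m \<in> Mods \<Longrightarrow> w m > 0 \<and> h m > 0"
    and "i \<in> Mods" and "j \<in> Mods" and "i < j"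
    and "\<And>k. Cpiece W H w h i j k \<noteq> {}"
    and "0 < lam" and "lam < 2"
    and "zs \<in> fixSet (relaxOp lam (Cunion W H w h i j))"
  shows "card (activeIdx W H w h i j zs) \<in> {1, 2}"
proof -
  let ?S = "{k. zs \<in> Cpiece W H w h i j k}"
  have zs_mem: "zs \<in> Cunion W H w h i j"
    using assms(9,11) fixSet_relaxOp by (metis less_irrefl)
  have active: "activeIdx W H w h i j zs = ?S"
    using activeIdx_of_mem_Cunion[OF assms(8) zs_mem] .
  have "w i > 0" "w j > 0" "h i > 0" "h j > 0"
    using assms(4-6) by auto
  then have "Cpiece W H w h i j sL \<inter> Cpiece W H w h i j sR = {}"
    and "Cpiece W H w h i j sB \<inter> Cpiece W H w h i j sA = {}"
    by (simp_all add: Cpiece_sL_sR_disjoint Cpiece_sB_sA_disjoint)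
  then have "\<not> {sL, sR} \<subseteq> ?S" "\<not> {sB, sA} \<subseteq> ?S"
    by blast+
  then have "card ?S \<le> 2"
    by (rule card_side_set_le_2)
  moreover have "card ?S \<ge> 1"
    using zs_mem finite_side_set by (auto simp: Cunion_def card_gt_0_iff Suc_le_eq)
  ultimately show ?thesis
    using active by auto
qed

end
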